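(* $\mathbf{K}^{\nabla\bullet}$ is sound and strongly complete with respect to the class of all frames: for every set $\Gamma\cup\{\phi\}\subseteq\mathcal{L}(\nabla,\bullet)$, $\Gamma\vdash_{\mathbf{K}^{\nabla\bullet}}\phi$ iff for every Kripke model $\mathcal{M}$ and state $s$, if $\mathcal{M},s\vDash\Gamma$ then $\mathcal{M},s\vDash\phi$.
   Context: $\mathcal{L}(\nabla,\bullet)$: $\phi::=p\mid\neg\phi\mid\phi\land\phi\mid\nabla\phi\mid\bullet\phi$ over a nonempty set $\mathbf{P}$ of propositional variables; $\Delta\phi:=\neg\nabla\phi$, $\circ\phi:=\neg\bullet\phi$. Kripke models $\langle S,R,V\rangle$ ($S\neq\emptyset$, $R\subseteq S\times S$, $V:\mathbf{P}\to\mathcal{P}(S)$): $s\vDash\nabla\phi$ iff there are $t,u$ with $sRt$, $sRu$, $t\vDash\phi$, $u\nvDash\phi$; $s\vDash\bullet\phi$ iff $s\vDash\phi$ and there is $t$ with $sRt$, $t\nvDash\phi$. The Hilbert system $\mathbf{K}^{\nabla\bullet}$ has axioms: A0 all propositional tautologies; A1 $\bullet\phi\to\phi$; A2 $\nabla\phi\leftrightarrow\nabla\neg\phi$; A3 $\bullet(\psi\to\phi)\land\phi\to\bullet\phi$; A4 $\nabla(\phi\land\psi)\to\nabla\phi\vee\nabla\psi$; A5 $\bullet(\phi\land\psi)\to\bullet\phi\vee\bullet\psi$; A6 $\nabla\phi\to\bullet\phi\vee\bullet\neg\phi$; A7 $\bullet(\phi\to\psi)\land\bullet(\neg\phi\to\chi)\to\nabla\phi$;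 rules R1 $\phi/\Delta\phi$; R2 $\phi/\circ\phi$; R3 $\phi\leftrightarrow\psi/\Delta\phi\leftrightarrow\Delta\psi$; R4 $\phi\leftrightarrow\psi/\circ\phi\leftrightarrow\circ\psi$; MP. $\Gamma\vdash\phi$ means $\vdash(\gamma_1\land\dots\land\gamma_n)\to\phi$ for some finite $\{\gamma_1,\dots,\gamma_n\}\subseteq\Gamma$. *)

theory Defs
  imports Main
begin

datatype 'p fm = Atom 'p | Neg "'p fm" | And "'p fm" "'p fm"
  | Nabla "'p fm" | Bullet "'p fm"

definition Imp :: "'p fm \<Rightarrow> 'p fm \<Rightarrow> 'p fm" where
  "Imp a b = Neg (And a (Neg b))"
definition Or :: "'p fm \<Rightarrow> 'p fm \<Rightarrow> 'p fm" where
  "Or a b = Neg (And (Neg a) (Neg b))"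
definition Iff :: "'p fm \<Rightarrow> 'p fm \<Rightarrow> 'p fm" where
  "Iff a b = And (Imp a b) (Imp b a)"
definition Delta :: "'p fm \<Rightarrow> 'p fm" where
  "Delta a = Neg (Nabla a)"
definition Circ :: "'p fm \<Rightarrow> 'p fm" where
  "Circ a = Neg (Bullet a)"

fun peval :: "('p fm \<Rightarrow> bool) \<Rightarrow> 'p fm \<Rightarrow> bool" where
  "peval f (Atom p) = f (Atom p)"
| "peval f (Neg a) = (\<not> peval f a)"
| "peval f (And a b) = (peval f a \<and> peval f b)"
| "peval f (Nabla a) = f (Nabla a)"
| "peval f (Bullet a) = f (Bullet a)"

definition tautology :: "'p fm \<Rightarrow> bool" where
  "tautology a = (\<forall>f. peval f a)"

inductive derivable :: "'p fm \<Rightarrow> bool" where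
  A0: "tautology a \<Longrightarrow> derivable a"
| A1: "derivable (Imp (Bullet a) a)"
| A2: "derivable (Iff (Nabla a) (Nabla (Neg a)))"
| A3: "derivable (Imp (And (Bullet (Imp b a)) a) (Bullet a))"
| A4: "derivable (Imp (Nabla (And a b)) (Or (Nabla a) (Nabla b)))"
| A5: "derivable (Imp (Bullet (And a b)) (Or (Bullet a) (Bullet b)))"
| A6: "derivable (Imp (Nabla a) (Or (Bullet a) (Bullet (Neg a))))"
| A7: "derivable (Imp (And (Bullet (Imp a b)) (Bullet (Imp (Neg a) c))) (Nabla a))"
| R1: "derivable a \<Longrightarrow> derivable (Delta a)"
| R2: "derivable a \<Longrightarrow> derivable (Circ a)"
| R3: "derivable (Iff a b) \<Longrightarrow> derivable (Iff (Delta a) (Delta b))"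
| R4: "derivable (Iff a b) \<Longrightarrow> derivable (Iff (Circ a) (Circ b))"
| MP: "derivable (Imp a b) \<Longrightarrow> derivable a \<Longrightarrow> derivable b"

fun conjs :: "'p fm list \<Rightarrow> 'p fm" where
  "conjs [] = undefined"
| "conjs [g] = g"
| "conjs (g # gs) = And g (conjs gs)"

definition derives :: "'p fm set \<Rightarrow> 'p fm \<Rightarrow> bool" where
  "derives G a = (\<exists>gs. set gs \<subseteq> G \<and>
     ((gs = [] \<and> derivable a) \<or> (gs \<noteq> [] \<and> derivable (Imp (conjs gs) a))))"

definition kmodel :: "'s set \<Rightarrow> ('s \<times> 's) set \<Rightarrow> ('p \<Rightarrow> 's set) \<Rightarrow> bool" where
  "kmodel S R V = (S \<noteq> {} \<and> R \<subseteq> S \<times> S \<and> (\<forall>p. V p \<subseteq> S))"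

fun sat :: "'s set \<Rightarrow> ('s \<times> 's) set \<Rightarrow> ('p \<Rightarrow> 's set) \<Rightarrow> 's \<Rightarrow> 'p fm \<Rightarrow> bool" where
  "sat S R V s (Atom p) = (s \<in> V p)"
| "sat S R V s (Neg a) = (\<not> sat S R V s a)"
| "sat S R V s (And a b) = (sat S R V s a \<and> sat S R V s b)"
| "sat S R V s (Nabla a) =
     (\<exists>t u. (s, t) \<in> R \<and> (s, u) \<in> R \<and> sat S R V t a \<and> \<not> sat S R V u a)"
| "sat S R V s (Bullet a) = (sat S R V s a \<and> (\<exists>t. (s, t) \<in> R \<and> \<not> sat S R V t a))"

definition conseq :: "'s itself \<Rightarrow> 'p fm set \<Rightarrow> 'p fm \<Rightarrow> bool" where
  "conseq _ G a = (\<forall>(S :: 's set) R (V :: 'p \<Rightarrow> 's set) s.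
     kmodel S R V \<and> s \<in> S \<and> (\<forall>g\<in>G. sat S R V s g) \<longrightarrow> sat S R V s a)"

end

theory Submission
  imports Defs
begin

text \<open>Completeness uses a canonical model whose
  worlds are the maximal consistent sets, where m sees n iff n contains every formula boxed at m:
  the a with a \<and> \<circ>a (true and not accidentally so), and the a with \<Delta>a \<and> \<bullet>\<not>a (false here
  and true at some successor, yet non-contingent, hence true at every successor). Axioms A3--A7
  show that a true consequence of boxed formulas is never accidental, and that a false one is
  non-contingent as soon as some premise is of the second kind; with Lindenbaum's lemma this
  gives the truth lemma for \<nabla> and \<bullet>.\<close>

lemma peval_Imp [simp]: "peval f (Imp a b) = (peval f a \<longrightarrow> peval f b)"
  by (simp add: Imp_def)

lemma peval_Or [simp]: "peval f (Or a b) = (peval f a \<or> peval f b)"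
  by (simp add: Or_def)

lemma peval_Iff [simp]: "peval f (Iff a b) = (peval f a \<longleftrightarrow> peval f b)"
  by (auto simp add: Iff_def)

fun impchain :: "'p fm list \<Rightarrow> 'p fm \<Rightarrow> 'p fm" where
  "impchain [] a = a"
| "impchain (g # gs) a = Imp g (impchain gs a)"

lemma peval_impchain [simp]:
  "peval f (impchain gs a) = ((\<forall>g\<in>set gs. peval f g) \<longrightarrow> peval f a)"
  by (induction gs) auto

lemma peval_conjs: "gs \<noteq> [] \<Longrightarrow> peval f (conjs gs) = (\<forall>g\<in>set gs. peval f g)"
  by (induction gs rule: conjs.induct) auto

definition Falsum :: "'p fm" where
  "Falsum = And (Atom undefined) (Neg (Atom undefined))"

lemma peval_Falsum [simp]: "\<not> peval f Falsum"
  by (simp add: Falsum_def)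

lemma derivable_tautology: "(\<And>f. peval f a) \<Longrightarrow> derivable a"
  by (rule A0) (simp add: tautology_def)

lemma derivable_Iff_tautology: "(\<And>f. peval f a = peval f b) \<Longrightarrow> derivable (Iff a b)"
  by (rule derivable_tautology) simp

lemma derivable_taut_mp:
  "derivable a \<Longrightarrow> (\<And>f. peval f a \<Longrightarrow> peval f b) \<Longrightarrow> derivable b"
  by (rule MP[of a b]) (auto intro!: derivable_tautology)

lemma derivable_taut_mp2:
  assumes "derivable a" "derivable b" "\<And>f. peval f a \<Longrightarrow> peval f b \<Longrightarrow> peval f c"
  shows "derivable c"
proof -
  have "derivable (Imp b c)"
    using assms(1) by (rule derivable_taut_mp) (use assms(3) in auto)
  then show ?thesis using assms(2) by (rule MP)
qed

lemma derives_if_derivable_impchain: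
  assumes "set gs \<subseteq> G" "derivable (impchain gs a)"
  shows "derives G a"
proof (cases "gs = []")
  case True
  then show ?thesis using assms by (auto simp: derives_def intro!: exI[of _ "[]"])
next
  case False
  have "derivable (Imp (conjs gs) a)"
    using assms(2) by (rule derivable_taut_mp) (simp add: peval_conjs[OF False])
  then show ?thesis using assms(1) False by (auto simp: derives_def)
qed

section \<open>Soundness\<close>

lemma sat_Imp [simp]: "sat S R V s (Imp a b) = (sat S R V s a \<longrightarrow> sat S R V s b)"
  by (simp add: Imp_def)

lemma sat_Or [simp]: "sat S R V s (Or a b) = (sat S R V s a \<or> sat S R V s b)"
  by (simp add: Or_def)

lemma sat_Iff [simp]: "sat S R V s (Iff a b) = (sat S R V s a \<longleftrightarrow> sat S R V s b)"
  by (auto simp add: Iff_def)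

lemma sat_Delta [simp]: "sat S R V s (Delta a) = (\<not> sat S R V s (Nabla a))"
  by (simp add: Delta_def)

lemma sat_Circ [simp]: "sat S R V s (Circ a) = (\<not> sat S R V s (Bullet a))"
  by (simp add: Circ_def)

lemma peval_sat: "peval (sat S R V s) a = sat S R V s a"
  by (induction a) auto

lemma sat_conjs: "gs \<noteq> [] \<Longrightarrow> sat S R V s (conjs gs) = (\<forall>g\<in>set gs. sat S R V s g)"
  by (induction gs rule: conjs.induct) auto

lemma derivable_valid: "derivable a \<Longrightarrow> sat S R V s a"
proof (induction a arbitrary: s rule: derivable.induct)
  case (A0 a)
  then show ?case by (metis peval_sat tautology_def)
qed (auto; blast)+

lemma soundness: "derives G a \<Longrightarrow> conseq TYPE('s) G a"
  unfolding derives_def conseq_def by (metis derivable_valid sat_Imp sat_conjs subsetD)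

section \<open>Maximal consistent sets\<close>

definition consistent :: "'p fm set \<Rightarrow> bool" where
  "consistent G = (\<nexists>gs. set gs \<subseteq> G \<and> derivable (impchain gs Falsum))"

definition mcs :: "'p fm set \<Rightarrow> bool" where
  "mcs m = (consistent m \<and> (\<forall>a. a \<in> m \<or> Neg a \<in> m))"

lemma inconsistent_insertE:
  assumes "\<not> consistent (insert a G)"
  obtains gs where "set gs \<subseteq> G" "derivable (impchain gs (Neg a))"
proof -
  obtain gs where gs: "set gs \<subseteq> insert a G" "derivable (impchain gs Falsum)"
    using assms by (auto simp: consistent_def)
  show thesis
  proof
    show "set (filter (\<lambda>g. g \<noteq> a) gs) \<subseteq> G" using gs(1) by auto
    show "derivable (impchain (filter (\<lambda>g. g \<noteq> a) gs) (Neg a))"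
      using gs(2) by (rule derivable_taut_mp) auto
  qed
qed

lemma inconsistent_insert_NegE:
  assumes "\<not> consistent (insert (Neg a) G)"
  obtains gs where "set gs \<subseteq> G" "derivable (impchain gs a)"
proof -
  obtain gs where gs: "set gs \<subseteq> G" "derivable (impchain gs (Neg (Neg a)))"
    using assms by (rule inconsistent_insertE)
  have "derivable (impchain gs a)" using gs(2) by (rule derivable_taut_mp) simp
  with gs(1) show thesis by (rule that)
qed

lemma consistent_Union_chain:
  assumes "C \<noteq> {}" "subset.chain {H. consistent H} C"
  shows "consistent (\<Union>C)"
  unfolding consistent_def
proof
  assume "\<exists>gs. set gs \<subseteq> \<Union>C \<and> derivable (impchain gs Falsum)"
  then obtain gs where gs: "set gs \<subseteq> \<Union>C" "derivable (impchain gs Falsum)" by blast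
  obtain B where "B \<in> C" "set gs \<subseteq> B"
    using finite_subset_Union_chain[OF _ gs(1) assms] by auto
  moreover have "consistent B" using \<open>B \<in> C\<close> assms(2) by (auto simp: subset_chain_def)
  ultimately show False using gs(2) unfolding consistent_def by blast
qed

lemma maximal_consistent_is_mcs:
  assumes M: "consistent M" and max: "\<And>X. consistent X \<Longrightarrow> M \<subseteq> X \<Longrightarrow> X = M"
  shows "mcs M"
proof -
  have "a \<in> M \<or> Neg a \<in> M" for a
  proof (rule ccontr)
    assume a: "\<not> (a \<in> M \<or> Neg a \<in> M)"
    have "\<not> consistent (insert b M)" if "b \<notin> M" for b
      using max[of "insert b M"] that by blast
    then have "\<not> consistent (insert a M)" "\<not> consistent (insert (Neg a) M)" using a by simp_all
    obtain gs1 where gs1: "set gs1 \<subseteq> M" "derivable (impchain gs1 (Neg a))"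
      using \<open>\<not> consistent (insert a M)\<close> by (rule inconsistent_insertE)
    obtain gs2 where gs2: "set gs2 \<subseteq> M" "derivable (impchain gs2 a)"
      using \<open>\<not> consistent (insert (Neg a) M)\<close> by (rule inconsistent_insert_NegE)
    have "derivable (impchain (gs1 @ gs2) Falsum)"
      using gs1(2) gs2(2) by (rule derivable_taut_mp2) auto
    moreover have "set (gs1 @ gs2) \<subseteq> M" using gs1(1) gs2(1) by simp
    ultimately show False using M unfolding consistent_def by blast
  qed
  then show ?thesis using M by (simp add: mcs_def)
qed

lemma not_derivable_Falsum: "\<not> derivable (Falsum :: 'p fm)"
proof
  assume "derivable (Falsum :: 'p fm)"
  from derivable_valid[OF this, of "{()}" "{}" "\<lambda>_. {}" "()"] show False
    by (simp add: Falsum_def)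
qed

lemma consistent_empty: "consistent {}"
  using not_derivable_Falsum by (simp add: consistent_def)

lemma lindenbaum:
  assumes "consistent G"
  obtains m where "mcs m" "G \<subseteq> m"
proof -
  let ?A = "{H. G \<subseteq> H \<and> consistent H}"
  have "\<exists>M\<in>?A. \<forall>X\<in>?A. M \<subseteq> X \<longrightarrow> X = M"
  proof (rule subset_Zorn)
    fix C assume C: "subset.chain ?A C"
    show "\<exists>U\<in>?A. \<forall>X\<in>C. X \<subseteq> U"
    proof (cases "C = {}")
      case True
      then show ?thesis using assms by auto
    next
      case False
      have "subset.chain {H. consistent H} C" using C by (auto simp: subset_chain_def)
      with False have "consistent (\<Union>C)" by (rule consistent_Union_chain)
      moreover have "G \<subseteq> \<Union>C" using False C unfolding subset_chain_def by blast
      ultimately show ?thesis by blast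
    qed
  qed
  then obtain M where M: "G \<subseteq> M" "consistent M" and max: "\<forall>X\<in>?A. M \<subseteq> X \<longrightarrow> X = M"
    by blast
  have "mcs M"
  proof (rule maximal_consistent_is_mcs[OF M(2)])
    fix X assume X: "consistent X" "M \<subseteq> X"
    then have "G \<subseteq> X" using M(1) by blast
    then show "X = M" using max X by blast
  qed
  then show thesis using M(1) by (rule that)
qed

lemma mcs_impchain:
  assumes m: "mcs m" and "set gs \<subseteq> m" "derivable (impchain gs a)"
  shows "a \<in> m"
proof (rule ccontr)
  assume "a \<notin> m"
  then have "Neg a \<in> m" using m unfolding mcs_def by blast
  then have "set (Neg a # gs) \<subseteq> m" using assms(2) by simp
  moreover have "derivable (impchain (Neg a # gs) Falsum)"
    using assms(3) by (rule derivable_taut_mp) auto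
  ultimately show False using m unfolding mcs_def consistent_def by blast
qed

lemma mcs_derivable: "mcs m \<Longrightarrow> derivable a \<Longrightarrow> a \<in> m"
  using mcs_impchain[of m "[]"] by simp

lemma mcs_tautology_mp:
  "mcs m \<Longrightarrow> set gs \<subseteq> m \<Longrightarrow> (\<And>f. \<forall>g\<in>set gs. peval f g \<Longrightarrow> peval f a) \<Longrightarrow> a \<in> m"
  by (erule mcs_impchain) (auto intro: derivable_tautology)

lemma mcs_mp: "mcs m \<Longrightarrow> derivable (Imp a b) \<Longrightarrow> a \<in> m \<Longrightarrow> b \<in> m"
  by (rule mcs_impchain[of m "[a]"]) auto

lemma mcs_Neg [simp]:
  assumes m: "mcs m"
  shows "(Neg a \<in> m) = (a \<notin> m)"
proof -
  have "derivable (impchain [a, Neg a] Falsum)" by (rule derivable_tautology) simp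
  then have "\<not> (a \<in> m \<and> Neg a \<in> m)" using m unfolding mcs_def consistent_def
    by (metis empty_subsetI insert_subset list.set)
  then show ?thesis using m by (auto simp: mcs_def)
qed

lemma mcs_And [simp]:
  assumes m: "mcs m"
  shows "(And a b \<in> m) = (a \<in> m \<and> b \<in> m)"
proof
  assume h: "And a b \<in> m"
  have "a \<in> m" by (rule mcs_tautology_mp[OF m, of "[And a b]"]) (use h in auto)
  moreover have "b \<in> m" by (rule mcs_tautology_mp[OF m, of "[And a b]"]) (use h in auto)
  ultimately show "a \<in> m \<and> b \<in> m" ..
next
  assume "a \<in> m \<and> b \<in> m"
  then show "And a b \<in> m" by (intro mcs_tautology_mp[OF m, of "[a, b]"]) auto
qed

lemma mcs_Imp [simp]: "mcs m \<Longrightarrow> (Imp a b \<in> m) = (a \<in> m \<longrightarrow> b \<in> m)"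
  by (simp add: Imp_def)

lemma mcs_Or [simp]: "mcs m \<Longrightarrow> (Or a b \<in> m) = (a \<in> m \<or> b \<in> m)"
  by (simp add: Or_def)

lemma mcs_Iff [simp]: "mcs m \<Longrightarrow> (Iff a b \<in> m) = (a \<in> m \<longleftrightarrow> b \<in> m)"
  by (auto simp add: Iff_def)

lemma mcs_BulletD: "mcs m \<Longrightarrow> Bullet a \<in> m \<Longrightarrow> a \<in> m"
  using mcs_mp[OF _ A1] by blast

lemma mcs_Nabla_Neg [simp]: "mcs m \<Longrightarrow> (Nabla (Neg a) \<in> m) = (Nabla a \<in> m)"
  using mcs_derivable[OF _ A2[of a]] by auto

lemma mcs_Bullet_cong:
  assumes m: "mcs m" and "derivable (Iff a b)"
  shows "(Bullet a \<in> m) = (Bullet b \<in> m)"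
proof -
  have "Iff (Circ a) (Circ b) \<in> m" using assms(2) by (intro mcs_derivable[OF m] R4)
  then show ?thesis using m by (simp add: Circ_def)
qed

lemma mcs_Nabla_cong:
  assumes m: "mcs m" and "derivable (Iff a b)"
  shows "(Nabla a \<in> m) = (Nabla b \<in> m)"
proof -
  have "Iff (Delta a) (Delta b) \<in> m" using assms(2) by (intro mcs_derivable[OF m] R3)
  then show ?thesis using m by (simp add: Delta_def)
qed

lemma mcs_not_Bullet_mono:
  assumes m: "mcs m" and "derivable (Imp a b)" "a \<in> m" "Bullet a \<notin> m"
  shows "Bullet b \<notin> m"
proof
  assume "Bullet b \<in> m"
  moreover have "derivable (Iff b (Imp (Imp b a) a))"
    using assms(2) by (rule derivable_taut_mp) auto
  ultimately have "Bullet (Imp (Imp b a) a) \<in> m" using mcs_Bullet_cong[OF m] by blast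
  then have "Bullet a \<in> m" using mcs_mp[OF m A3[of "Imp b a" a]] assms(3) m by simp
  with assms(4) show False by contradiction
qed

lemma mcs_not_Bullet_And:
  "mcs m \<Longrightarrow> Bullet a \<notin> m \<Longrightarrow> Bullet b \<notin> m \<Longrightarrow> Bullet (And a b) \<notin> m"
  using mcs_mp[OF _ A5[of a b]] by auto

lemma mcs_not_Nabla_if_not_Bullet:
  "mcs m \<Longrightarrow> a \<in> m \<Longrightarrow> Bullet a \<notin> m \<Longrightarrow> Nabla a \<notin> m"
  using mcs_mp[OF _ A6[of a]] mcs_BulletD[of m "Neg a"] by auto

lemma mcs_not_Bullet_Or_left:
  assumes m: "mcs m" and c: "Nabla c \<notin> m" "Bullet (Neg c) \<in> m"
  shows "Bullet (Or c a) \<notin> m"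
proof
  assume "Bullet (Or c a) \<in> m"
  then have "Bullet (Imp (Neg c) a) \<in> m"
    using mcs_Bullet_cong[OF m derivable_Iff_tautology, of "Or c a" "Imp (Neg c) a"] by auto
  moreover have "Bullet (Imp (Neg (Neg c)) (Neg c)) \<in> m"
    using c mcs_Bullet_cong[OF m derivable_Iff_tautology, of "Neg c" "Imp (Neg (Neg c)) (Neg c)"]
    by auto
  ultimately have "Nabla (Neg c) \<in> m" using mcs_mp[OF m A7[of "Neg c" a "Neg c"]] m by simp
  then show False using c m by simp
qed

lemma mcs_not_Nabla_Or_left:
  assumes m: "mcs m" and c: "Nabla c \<notin> m" "Bullet (Neg c) \<in> m"
  shows "Nabla (Or c a) \<notin> m"
proof (cases "a \<in> m")
  case True
  then show ?thesis
    using mcs_not_Bullet_Or_left[OF m c] mcs_not_Nabla_if_not_Bullet[OF m, of "Or c a"] m by simp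
next
  case False
  show ?thesis
  proof
    assume "Nabla (Or c a) \<in> m"
    then have "Nabla (And (Neg c) (Or c (Neg a))) \<in> m"
      using mcs_Nabla_cong[OF m derivable_Iff_tautology, of "Or c a"
          "Neg (And (Neg c) (Or c (Neg a)))"] m
      by auto
    then have "Nabla (Neg c) \<in> m \<or> Nabla (Or c (Neg a)) \<in> m"
      using mcs_mp[OF m A4] m by fastforce
    moreover have "Nabla (Or c (Neg a)) \<notin> m"
      using mcs_not_Bullet_Or_left[OF m c] mcs_not_Nabla_if_not_Bullet[OF m, of "Or c (Neg a)"]
        m False
      by simp
    ultimately show False using c m by simp
  qed
qed

section \<open>Boxed formulas\<close>

definition boxed :: "'p fm set \<Rightarrow> 'p fm set" where
  "boxed m = {a. a \<in> m \<and> Bullet a \<notin> m} \<union> {a. Nabla a \<notin> m \<and> Bullet (Neg a) \<in> m}"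

lemma mcs_not_Nabla_boxed:
  assumes m: "mcs m" and "Nabla a \<notin> m"
  shows "a \<in> boxed m \<or> Neg a \<in> boxed m"
proof -
  have "Bullet a \<in> m \<longleftrightarrow> Bullet (Neg (Neg a)) \<in> m"
    using mcs_Bullet_cong[OF m derivable_Iff_tautology, of a "Neg (Neg a)"] by simp
  then show ?thesis using assms by (auto simp: boxed_def)
qed

lemma boxed_impchain_not_Bullet:
  "mcs m \<Longrightarrow> set gs \<subseteq> boxed m \<Longrightarrow> a \<in> m \<Longrightarrow> derivable (impchain gs a) \<Longrightarrow> Bullet a \<notin> m"
proof (induction gs arbitrary: a)
  case Nil
  then show ?case using mcs_derivable[OF _ R2[of a]] by (auto simp: Circ_def)
next
  case (Cons g gs)
  \<comment> \<open>a is equivalent to (g \<longrightarrow> a) \<and> (g \<or> a), and neither conjunct is accidental\<close>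
  note m = \<open>mcs m\<close>
  have "derivable (impchain gs (Imp g a))"
    using \<open>derivable (impchain (g # gs) a)\<close> by (rule derivable_taut_mp) auto
  then have "Bullet (Imp g a) \<notin> m" using Cons by auto
  moreover have "Bullet (Or g a) \<notin> m"
  proof -
    have "g \<in> boxed m" using Cons.prems(2) by simp
    then consider "g \<in> m" "Bullet g \<notin> m" | "Nabla g \<notin> m" "Bullet (Neg g) \<in> m"
      by (auto simp: boxed_def)
    then show ?thesis
    proof cases
      case 1
      have "derivable (Imp g (Or g a))" by (rule derivable_tautology) simp
      then show ?thesis using 1 by (rule mcs_not_Bullet_mono[OF m])
    next
      case 2
      then show ?thesis by (rule mcs_not_Bullet_Or_left[OF m])
    qed
  qed
  ultimately have "Bullet (And (Imp g a) (Or g a)) \<notin> m" by (rule mcs_not_Bullet_And[OF m])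
  moreover have "And (Imp g a) (Or g a) \<in> m" using \<open>a \<in> m\<close> m by simp
  moreover have "derivable (Imp (And (Imp g a) (Or g a)) a)" by (rule derivable_tautology) auto
  ultimately show ?case using mcs_not_Bullet_mono[OF m] by blast
qed

lemma boxed_impchain_not_Nabla:
  assumes m: "mcs m" and gs: "set gs \<subseteq> boxed m" "derivable (impchain gs a)" and "a \<notin> m"
    and c: "Nabla c \<notin> m" "Bullet (Neg c) \<in> m"
  shows "Nabla a \<notin> m"
proof
  \<comment> \<open>a is equivalent to (c \<or> a) \<and> (a \<or> \<not>c), and neither conjunct is contingent\<close>
  assume "Nabla a \<in> m"
  then have "Nabla (And (Or c a) (Or a (Neg c))) \<in> m"
    using mcs_Nabla_cong[OF m derivable_Iff_tautology, of a "And (Or c a) (Or a (Neg c))"]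
    by auto
  then have "Nabla (Or c a) \<in> m \<or> Nabla (Or a (Neg c)) \<in> m"
    using mcs_mp[OF m A4] m by fastforce
  moreover have "Nabla (Or c a) \<notin> m" using mcs_not_Nabla_Or_left[OF m c] .
  moreover have "Nabla (Or a (Neg c)) \<notin> m"
  proof (rule mcs_not_Nabla_if_not_Bullet[OF m])
    have "Neg c \<in> m" using mcs_BulletD[OF m c(2)] .
    then show "Or a (Neg c) \<in> m" using m by simp
    show "Bullet (Or a (Neg c)) \<notin> m"
      using boxed_impchain_not_Bullet[OF m gs(1) \<open>Or a (Neg c) \<in> m\<close>] gs(2)
        derivable_taut_mp by fastforce
  qed
  ultimately show False by blast
qed

lemma consistent_insert_boxed:
  assumes m: "mcs m" and "Nabla a \<in> m"
  shows "consistent (insert a (boxed m))"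
proof (rule ccontr)
  assume "\<not> consistent (insert a (boxed m))"
  then obtain gs where gs: "set gs \<subseteq> boxed m" "derivable (impchain gs (Neg a))"
    by (rule inconsistent_insertE)
  show False
  proof (cases "a \<in> m")
    case False
    then have "Bullet (Neg a) \<notin> m"
      using boxed_impchain_not_Bullet[OF m gs(1) _ gs(2)] m by simp
    moreover have "Bullet a \<notin> m" using False mcs_BulletD[OF m] by blast
    ultimately show False using mcs_mp[OF m A6[of a]] \<open>Nabla a \<in> m\<close> m by simp
  next
    case True
    then have "Neg a \<notin> m" using m by simp
    then have "\<not> set gs \<subseteq> m" using mcs_impchain[OF m _ gs(2)] by blast
    then obtain c where "Nabla c \<notin> m" "Bullet (Neg c) \<in> m"
      using gs(1) by (auto simp: boxed_def)
    then have "Nabla (Neg a) \<notin> m" by (rule boxed_impchain_not_Nabla[OF m gs \<open>Neg a \<notin> m\<close>])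
    then show False using \<open>Nabla a \<in> m\<close> m by simp
  qed
qed

lemma consistent_insert_Neg_boxed:
  assumes m: "mcs m" and "Bullet a \<in> m"
  shows "consistent (insert (Neg a) (boxed m))"
proof (rule ccontr)
  assume "\<not> consistent (insert (Neg a) (boxed m))"
  then obtain gs where "set gs \<subseteq> boxed m" "derivable (impchain gs a)"
    by (rule inconsistent_insert_NegE)
  then show False
    using boxed_impchain_not_Bullet[OF m] mcs_BulletD[OF m] \<open>Bullet a \<in> m\<close> by blast
qed

lemma mcs_Nabla_iff_boxed:
  assumes m: "mcs m"
  shows "Nabla a \<in> m \<longleftrightarrow>
    (\<exists>n n'. mcs n \<and> boxed m \<subseteq> n \<and> mcs n' \<and> boxed m \<subseteq> n' \<and> a \<in> n \<and> a \<notin> n')"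
proof
  assume "Nabla a \<in> m"
  then have "consistent (insert a (boxed m))" "consistent (insert (Neg a) (boxed m))"
    using consistent_insert_boxed[OF m] m by simp_all
  then show "\<exists>n n'. mcs n \<and> boxed m \<subseteq> n \<and> mcs n' \<and> boxed m \<subseteq> n' \<and> a \<in> n \<and> a \<notin> n'"
    by (elim lindenbaum) auto
next
  assume "\<exists>n n'. mcs n \<and> boxed m \<subseteq> n \<and> mcs n' \<and> boxed m \<subseteq> n' \<and> a \<in> n \<and> a \<notin> n'"
  then obtain n n' where n: "mcs n" "boxed m \<subseteq> n" "mcs n'" "boxed m \<subseteq> n'" "a \<in> n" "a \<notin> n'"
    by blast
  show "Nabla a \<in> m"
  proof (rule ccontr)
    assume "Nabla a \<notin> m"
    then consider "a \<in> boxed m" | "Neg a \<in> boxed m" using mcs_not_Nabla_boxed[OF m] by blast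
    then show False using n by cases auto
  qed
qed

lemma mcs_Bullet_iff_boxed:
  assumes m: "mcs m"
  shows "Bullet a \<in> m \<longleftrightarrow> a \<in> m \<and> (\<exists>n. mcs n \<and> boxed m \<subseteq> n \<and> a \<notin> n)"
proof
  assume "Bullet a \<in> m"
  with m have "consistent (insert (Neg a) (boxed m))" by (rule consistent_insert_Neg_boxed)
  then show "a \<in> m \<and> (\<exists>n. mcs n \<and> boxed m \<subseteq> n \<and> a \<notin> n)"
    using mcs_BulletD[OF m \<open>Bullet a \<in> m\<close>] by (elim lindenbaum) auto
next
  assume "a \<in> m \<and> (\<exists>n. mcs n \<and> boxed m \<subseteq> n \<and> a \<notin> n)"
  then show "Bullet a \<in> m" by (auto simp: boxed_def)
qed

section \<open>The canonical model\<close>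

text \<open>The completeness half of theorem1 fixes the state type to sets of sets of formulas, so the
  maximal consistent set n is represented by the state {n}.\<close>

definition canon_states :: "'p fm set set set" where
  "canon_states = {{n} | n. mcs n}"

definition canon_rel :: "('p fm set set \<times> 'p fm set set) set" where
  "canon_rel = {({n}, {n'}) | n n'. mcs n \<and> mcs n' \<and> boxed n \<subseteq> n'}"

definition canon_val :: "'p \<Rightarrow> 'p fm set set set" where
  "canon_val p = {{n} | n. mcs n \<and> Atom p \<in> n}"

lemma kmodel_canon: "kmodel (canon_states :: 'p fm set set set) canon_rel canon_val"
proof -
  obtain n :: "'p fm set" where "mcs n" using consistent_empty by (rule lindenbaum)
  then have "{n} \<in> canon_states" unfolding canon_states_def by auto
  then have "(canon_states :: 'p fm set set set) \<noteq> {}" by blast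
  moreover have "canon_rel \<subseteq> (canon_states :: 'p fm set set set) \<times> canon_states"
    unfolding canon_rel_def canon_states_def by blast
  moreover have "canon_val p \<subseteq> (canon_states :: 'p fm set set set)" for p
    by (auto simp: canon_val_def canon_states_def)
  ultimately show ?thesis by (simp add: kmodel_def)
qed

lemma canon_rel_iff:
  "mcs n \<Longrightarrow> ({n}, t) \<in> canon_rel \<longleftrightarrow> (\<exists>n'. t = {n'} \<and> mcs n' \<and> boxed n \<subseteq> n')"
  by (auto simp: canon_rel_def)

lemma canon_truth: "mcs n \<Longrightarrow> sat canon_states canon_rel canon_val {n} a \<longleftrightarrow> a \<in> n"
proof (induction a arbitrary: n)
  case (Atom p)
  then show ?case by (auto simp: canon_val_def)
next
  case (Nabla a)
  have "sat canon_states canon_rel canon_val {n} (Nabla a) \<longleftrightarrow>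
    (\<exists>n1 n2. mcs n1 \<and> boxed n \<subseteq> n1 \<and> mcs n2 \<and> boxed n \<subseteq> n2 \<and> a \<in> n1 \<and> a \<notin> n2)"
    using Nabla by (auto simp: canon_rel_iff)
  also have "\<dots> \<longleftrightarrow> Nabla a \<in> n" using mcs_Nabla_iff_boxed[OF Nabla.prems] by simp
  finally show ?case .
next
  case (Bullet a)
  have "sat canon_states canon_rel canon_val {n} (Bullet a) \<longleftrightarrow>
    a \<in> n \<and> (\<exists>n'. mcs n' \<and> boxed n \<subseteq> n' \<and> a \<notin> n')"
    using Bullet by (auto simp: canon_rel_iff)
  also have "\<dots> \<longleftrightarrow> Bullet a \<in> n" using mcs_Bullet_iff_boxed[OF Bullet.prems] by simp
  finally show ?case .
qed simp_all

section \<open>Completeness\<close>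

lemma consistent_insert_Neg_if_not_derives:
  "\<not> derives G a \<Longrightarrow> consistent (insert (Neg a) G)"
  by (metis inconsistent_insert_NegE derives_if_derivable_impchain)

lemma completeness:
  fixes G :: "'p fm set"
  assumes conseq: "conseq TYPE('p fm set set) G a"
  shows "derives G a"
proof (rule ccontr)
  assume "\<not> derives G a"
  then have "consistent (insert (Neg a) G)" by (rule consistent_insert_Neg_if_not_derives)
  then obtain n where n: "mcs n" "insert (Neg a) G \<subseteq> n" by (rule lindenbaum)
  have "{n} \<in> canon_states" using n(1) by (auto simp: canon_states_def)
  moreover have "\<forall>g\<in>G. sat canon_states canon_rel canon_val {n} g"
    using n canon_truth by blast
  ultimately have "sat canon_states canon_rel canon_val {n} a"
    using conseq[unfolded conseq_def, rule_format, of canon_states canon_rel canon_val "{n}"]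
      kmodel_canon by blast
  then show False using n canon_truth by auto
qed

theorem theorem1:
  fixes G :: "'p fm set" and a :: "'p fm"
  shows "(derives G a \<longrightarrow> conseq TYPE('s) G a)
       \<and> (conseq TYPE('p fm set set) G a \<longrightarrow> derives G a)"
  using soundness completeness by blast

end
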